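(* Let $\sigma_e>0$, $\beta=(\beta_2,\beta_1)^T\in\mathbb{R}^2$. For every integer $n>2$ let $x_1,\dots,x_n\in\mathbb{R}$ be deterministic (possibly depending on $n$), $X_n$ the $n\times2$ matrix with rows $(1,x_i)$, $Y_n=(y_1,\dots,y_n)^T\sim\mathcal{N}(X_n\beta,\sigma_e^2I_{n\times n})$, and let $\Delta_n>0$, $\rho_n>0$ be sequences. Assume: (1) $\bar x\to c_x$, $\overline{x^2}\to c_{x^2}$ with $c_{x^2}>c_x^2$; (2) $\eta_n^2\to\eta^2$ for some $\eta\in\mathbb{R}$, where $\eta_n^2=\|X_n\beta-X_n\beta^N\|^2/\sigma_e^2$, $\beta^N=(\beta_2+\beta_1\bar x,0)^T$; (3) $\Delta_n^2/(\rho_nn)\to0$, $\Delta_n^4/(\rho_nn)\to0$; (4) $\mathbb{P}[\exists i,\ y_i\notin[-\Delta_n,\Delta_n]]\to0$ and $x_i\in[-\Delta_n,\Delta_n]$ for all $i$. Then $\sqrt n(\tilde\beta^N-\hat\beta^N)\xrightarrow{P}0$ and $\sqrt n(\tilde\beta-\hat\beta)\xrightarrow{P}0$.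
   Context: $\bar x=\frac1n\sum x_i$, $\overline{x^2}=\frac1n\sum x_i^2$, $\bar y=\frac1n\sum y_i$, $\overline{xy}=\frac1n\sum x_iy_i$. Non-private estimates: $\hat\beta_1=\frac{\overline{xy}-\bar x\bar y}{\overline{x^2}-\bar x^2}$, $\hat\beta_2=\bar y-\hat\beta_1\bar x$, $\hat\beta=(\hat\beta_2,\hat\beta_1)^T$, $\hat\beta^N=(\bar y,0)^T$. $[z]_a^b$ is $z$ clipped to $[a,b]$. With $\Delta=\Delta_n$, $\rho'=\rho_n/5$ and independent Gaussian noises: $\tilde{\bar x}=\frac1n\sum_i[x_i]_{-\Delta}^{\Delta}+\mathcal{N}(0,\frac{2\Delta^2}{\rho'n^2})$, $\tilde{\bar y}=\frac1n\sum_i[y_i]_{-\Delta}^{\Delta}+\mathcal{N}(0,\frac{2\Delta^2}{\rho'n^2})$, $\widetilde{\overline{x^2}}=\frac1n\sum_i[x_i^2]_0^{\Delta^2}+\mathcal{N}(0,\frac{\Delta^4}{2\rho'n^2})$, $\widetilde{\overline{xy}}=\frac1n\sum_i[x_iy_i]_{-\Delta^2}^{\Delta^2}+\mathcal{N}(0,\frac{2\Delta^4}{\rho'n^2})$; $\tilde\beta_1=\frac{\widetilde{\overline{xy}}-\tilde{\bar x}\tilde{\bar y}}{\widetilde{\overline{x^2}}-\tilde{\bar x}^2}$, $\tilde\beta_2=\frac{\tilde{\bar y}\widetilde{\overline{x^2}}-\tilde{\bar x}\widetilde{\overline{xy}}}{\widetilde{\overline{x^2}}-\tilde{\bar x}^2}$,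 $\tilde\beta=(\tilde\beta_2,\tilde\beta_1)^T$, $\tilde\beta^N=(\tilde{\bar y},0)^T$. Convergence is as $n\to\infty$. *)

theory Defs
  imports "HOL-Probability.Probability"
begin

definition clip :: "real \<Rightarrow> real \<Rightarrow> real \<Rightarrow> real" where
  "clip a b z = max a (min b z)"

definition avg :: "nat \<Rightarrow> (nat \<Rightarrow> real) \<Rightarrow> real" where
  "avg n f = (\<Sum>i<n. f i) / real n"

text \<open>Non-private OLS estimates; vectors written as pairs (intercept, slope).\<close>
definition hat_beta1 :: "nat \<Rightarrow> (nat \<Rightarrow> real) \<Rightarrow> (nat \<Rightarrow> real) \<Rightarrow> real" where
  "hat_beta1 n xs ys =
     (avg n (\<lambda>i. xs i * ys i) - avg n xs * avg n ys) / (avg n (\<lambda>i. (xs i)\<^sup>2) - (avg n xs)\<^sup>2)"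

definition hat_beta :: "nat \<Rightarrow> (nat \<Rightarrow> real) \<Rightarrow> (nat \<Rightarrow> real) \<Rightarrow> real \<times> real" where
  "hat_beta n xs ys = (avg n ys - hat_beta1 n xs ys * avg n xs, hat_beta1 n xs ys)"

definition hat_betaN :: "nat \<Rightarrow> (nat \<Rightarrow> real) \<Rightarrow> real \<times> real" where
  "hat_betaN n ys = (avg n ys, 0)"

text \<open>Private sufficient statistics. z 0, z 1, z 2, z 3 are independent standard normal
  draws; a N(0,v) noise is realised as sqrt v * z k. rho' = rho / 5.\<close>
definition t_xbar :: "nat \<Rightarrow> real \<Rightarrow> real \<Rightarrow> (nat \<Rightarrow> real) \<Rightarrow> (nat \<Rightarrow> real) \<Rightarrow> real" where
  "t_xbar n D rho xs z = avg n (\<lambda>i. clip (-D) D (xs i))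
      + sqrt (2 * D\<^sup>2 / ((rho / 5) * (real n)\<^sup>2)) * z 0"

definition t_ybar :: "nat \<Rightarrow> real \<Rightarrow> real \<Rightarrow> (nat \<Rightarrow> real) \<Rightarrow> (nat \<Rightarrow> real) \<Rightarrow> real" where
  "t_ybar n D rho ys z = avg n (\<lambda>i. clip (-D) D (ys i))
      + sqrt (2 * D\<^sup>2 / ((rho / 5) * (real n)\<^sup>2)) * z 1"

definition t_x2bar :: "nat \<Rightarrow> real \<Rightarrow> real \<Rightarrow> (nat \<Rightarrow> real) \<Rightarrow> (nat \<Rightarrow> real) \<Rightarrow> real" where
  "t_x2bar n D rho xs z = avg n (\<lambda>i. clip 0 (D\<^sup>2) ((xs i)\<^sup>2))
      + sqrt (D ^ 4 / (2 * (rho / 5) * (real n)\<^sup>2)) * z 2"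

definition t_xybar :: "nat \<Rightarrow> real \<Rightarrow> real \<Rightarrow> (nat \<Rightarrow> real) \<Rightarrow> (nat \<Rightarrow> real) \<Rightarrow> (nat \<Rightarrow> real) \<Rightarrow> real" where
  "t_xybar n D rho xs ys z = avg n (\<lambda>i. clip (-(D\<^sup>2)) (D\<^sup>2) (xs i * ys i))
      + sqrt (2 * D ^ 4 / ((rho / 5) * (real n)\<^sup>2)) * z 3"

definition tilde_beta :: "nat \<Rightarrow> real \<Rightarrow> real \<Rightarrow> (nat \<Rightarrow> real) \<Rightarrow> (nat \<Rightarrow> real) \<Rightarrow> (nat \<Rightarrow> real) \<Rightarrow> real \<times> real" where
  "tilde_beta n D rho xs ys z =
    (let tx = t_xbar n D rho xs z; ty = t_ybar n D rho ys z;
         tx2 = t_x2bar n D rho xs z; txy = t_xybar n D rho xs ys z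
     in ((ty * tx2 - tx * txy) / (tx2 - tx\<^sup>2), (txy - tx * ty) / (tx2 - tx\<^sup>2)))"

definition tilde_betaN :: "nat \<Rightarrow> real \<Rightarrow> real \<Rightarrow> (nat \<Rightarrow> real) \<Rightarrow> (nat \<Rightarrow> real) \<Rightarrow> real \<times> real" where
  "tilde_betaN n D rho ys z = (t_ybar n D rho ys z, 0)"

definition conv_in_prob :: "(nat \<Rightarrow> 'a measure) \<Rightarrow> (nat \<Rightarrow> 'a \<Rightarrow> 'b::metric_space) \<Rightarrow> 'b \<Rightarrow> bool" where
  "conv_in_prob M X c \<longleftrightarrow>
     (\<forall>e>0. (\<lambda>n. measure (M n) {\<omega> \<in> space (M n). dist (X n \<omega>) c > e}) \<longlonglongrightarrow> 0)"

end

theory Submission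
  imports Defs
begin

text \<open>Off the event that some response \<open>y\<^sub>i\<close> is clipped, whose probability tends to zero by
  assumption, each private statistic is the exact empirical moment plus an independent Gaussian
  noise, and \<open>\<surd>n\<close> times its standard deviation tends to zero because
  \<open>\<Delta>\<^sub>n\<^sup>2/(\<rho>\<^sub>n n) \<rightarrow> 0\<close> and \<open>\<Delta>\<^sub>n\<^sup>4/(\<rho>\<^sub>n n) \<rightarrow> 0\<close>. Both estimators are
  rational functions of the four empirical moments with the same denominator, the empirical
  variance of the design, which converges to \<open>c\<^sub>x\<^sub>2 - c\<^sub>x\<^sup>2 > 0\<close>. A delta-method argument
  in the calculus of \<open>o\<^sub>P(1)\<close> and \<open>O\<^sub>P(1)\<close> sequences then shows that \<open>\<surd>n\<close> times the
  difference tends to zero in probability; the only random moments, the means of \<open>y\<^sub>i\<close> and of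
  \<open>x\<^sub>i y\<^sub>i\<close>, are \<open>O\<^sub>P(1)\<close> by Chebyshev's inequality for Gaussian averages.\<close>

section \<open>Vanishing and bounded sequences in probability\<close>

text \<open>The notions \<open>o\<^sub>P(1)\<close> and \<open>O\<^sub>P(1)\<close>. Measurability is only required eventually, since
  the model is only specified for \<open>n > 2\<close>.\<close>

definition vanishes_in_prob :: "(nat \<Rightarrow> 'a measure) \<Rightarrow> (nat \<Rightarrow> 'a \<Rightarrow> real) \<Rightarrow> bool" where
  "vanishes_in_prob M X \<longleftrightarrow> (\<forall>\<^sub>F n in sequentially. X n \<in> borel_measurable (M n)) \<and>
     (\<forall>e>0. (\<lambda>n. measure (M n) {w \<in> space (M n). e < \<bar>X n w\<bar>}) \<longlonglongrightarrow> 0)"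

definition bounded_in_prob :: "(nat \<Rightarrow> 'a measure) \<Rightarrow> (nat \<Rightarrow> 'a \<Rightarrow> real) \<Rightarrow> bool" where
  "bounded_in_prob M X \<longleftrightarrow> (\<forall>\<^sub>F n in sequentially. X n \<in> borel_measurable (M n)) \<and>
     (\<forall>b>0. \<exists>K. \<forall>\<^sub>F n in sequentially. measure (M n) {w \<in> space (M n). K < \<bar>X n w\<bar>} < b)"

lemma measure_tendsto_zeroI:
  assumes "\<And>b. b > 0 \<Longrightarrow> \<forall>\<^sub>F n in sequentially. measure (M n) (A n) < b"
  shows "(\<lambda>n. measure (M n) (A n)) \<longlonglongrightarrow> 0"
proof (rule order_tendstoI)
  fix a :: real assume "a < 0"
  then show "\<forall>\<^sub>F n in sequentially. a < measure (M n) (A n)"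
    by (intro always_eventually allI) (rule less_le_trans[OF _ measure_nonneg])
qed (fact assms)

lemma sets_abs_gt:
  fixes X :: "'a \<Rightarrow> real"
  assumes "X \<in> borel_measurable N"
  shows "{w \<in> space N. c < \<bar>X w\<bar>} \<in> sets N"
proof -
  have "(\<lambda>w. \<bar>X w\<bar>) -` {c<..} \<inter> space N \<in> sets N"
    using borel_measurable_abs[OF assms] by (rule measurable_sets) simp
  moreover have "(\<lambda>w. \<bar>X w\<bar>) -` {c<..} \<inter> space N = {w \<in> space N. c < \<bar>X w\<bar>}"
    by auto
  ultimately show ?thesis by simp
qed

lemma vanishes_in_probI:
  assumes "\<forall>\<^sub>F n in sequentially. X n \<in> borel_measurable (M n)"
    and "\<And>e b. e > 0 \<Longrightarrow> b > 0 \<Longrightarrow>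
      \<forall>\<^sub>F n in sequentially. measure (M n) {w \<in> space (M n). e < \<bar>X n w\<bar>} < b"
  shows "vanishes_in_prob M X"
  using assms by (auto simp: vanishes_in_prob_def intro: measure_tendsto_zeroI)

lemma bounded_in_probI:
  assumes "\<forall>\<^sub>F n in sequentially. X n \<in> borel_measurable (M n)"
    and "\<And>b. b > 0 \<Longrightarrow> \<exists>K. \<forall>\<^sub>F n in sequentially. measure (M n) {w \<in> space (M n). K < \<bar>X n w\<bar>} < b"
  shows "bounded_in_prob M X"
  using assms by (simp add: bounded_in_prob_def)

lemma vanishes_in_prob_measurable:
  "vanishes_in_prob M X \<Longrightarrow> \<forall>\<^sub>F n in sequentially. X n \<in> borel_measurable (M n)"
  by (simp add: vanishes_in_prob_def)

lemma bounded_in_prob_measurable: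
  "bounded_in_prob M X \<Longrightarrow> \<forall>\<^sub>F n in sequentially. X n \<in> borel_measurable (M n)"
  by (simp add: bounded_in_prob_def)

lemma vanishes_in_probD:
  assumes "vanishes_in_prob M X" "e > 0" "b > 0"
  shows "\<forall>\<^sub>F n in sequentially. {w \<in> space (M n). e < \<bar>X n w\<bar>} \<in> sets (M n) \<and>
    measure (M n) {w \<in> space (M n). e < \<bar>X n w\<bar>} < b"
proof -
  have "\<forall>\<^sub>F n in sequentially. measure (M n) {w \<in> space (M n). e < \<bar>X n w\<bar>} < b"
    using assms unfolding vanishes_in_prob_def by (auto intro: order_tendstoD(2))
  with vanishes_in_prob_measurable[OF assms(1)] show ?thesis
    by eventually_elim (simp add: sets_abs_gt)
qed

lemma scaled_quotient_diff_eq: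
  fixes r P P' Q Q' :: real
  assumes "Q \<noteq> 0" "Q' \<noteq> 0"
  shows "r * (P' / Q' - P / Q) = (r * (P' - P) * Q - P * (r * (Q' - Q))) / (Q * Q')"
  using assms by (simp add: field_simps)

locale prob_space_sequence =
  fixes M :: "nat \<Rightarrow> 'a measure"
  assumes prob_spaces: "\<forall>\<^sub>F n in sequentially. prob_space (M n)"
begin

lemma eventually_measure_less_if_cover:
  assumes "\<forall>\<^sub>F n in sequentially. A n \<subseteq> B n \<union> C n"
    and "\<forall>\<^sub>F n in sequentially. B n \<in> sets (M n) \<and> measure (M n) (B n) < b1"
    and "\<forall>\<^sub>F n in sequentially. C n \<in> sets (M n) \<and> measure (M n) (C n) < b2"
  shows "\<forall>\<^sub>F n in sequentially. measure (M n) (A n) < b1 + b2"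
  using prob_spaces assms
proof eventually_elim
  case (elim n)
  interpret prob_space "M n" by fact
  have "measure (M n) (A n) \<le> measure (M n) (B n \<union> C n)"
    using elim by (intro finite_measure_mono) auto
  also have "\<dots> \<le> measure (M n) (B n) + measure (M n) (C n)"
    using elim by (intro measure_Un_le) auto
  finally show ?case using elim by linarith
qed

lemma bounded_in_probD:
  assumes "bounded_in_prob M X" "b > 0"
  obtains K where "K > 0" "\<forall>\<^sub>F n in sequentially. {w \<in> space (M n). K < \<bar>X n w\<bar>} \<in> sets (M n) \<and>
    measure (M n) {w \<in> space (M n). K < \<bar>X n w\<bar>} < b"
proof -
  obtain K where K: "\<forall>\<^sub>F n in sequentially. measure (M n) {w \<in> space (M n). K < \<bar>X n w\<bar>} < b"
    using assms unfolding bounded_in_prob_def by blast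
  have "\<forall>\<^sub>F n in sequentially. {w \<in> space (M n). max K 1 < \<bar>X n w\<bar>} \<in> sets (M n) \<and>
    measure (M n) {w \<in> space (M n). max K 1 < \<bar>X n w\<bar>} < b"
    using K prob_spaces bounded_in_prob_measurable[OF assms(1)]
  proof eventually_elim
    case (elim n)
    interpret prob_space "M n" by fact
    have "measure (M n) {w \<in> space (M n). max K 1 < \<bar>X n w\<bar>} \<le> measure (M n) {w \<in> space (M n). K < \<bar>X n w\<bar>}"
      using elim by (intro finite_measure_mono sets_abs_gt) auto
    with elim show ?case by (auto intro: sets_abs_gt)
  qed
  then show thesis by (rule that[rotated]) simp
qed

lemma vanishes_in_prob_add:
  assumes X: "vanishes_in_prob M X" and Y: "vanishes_in_prob M Y"
  shows "vanishes_in_prob M (\<lambda>n w. X n w + Y n w)"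
proof (rule vanishes_in_probI)
  show "\<forall>\<^sub>F n in sequentially. (\<lambda>w. X n w + Y n w) \<in> borel_measurable (M n)"
    using vanishes_in_prob_measurable[OF X] vanishes_in_prob_measurable[OF Y] by eventually_elim auto
  fix e b :: real assume "e > 0" "b > 0"
  have "e/2 < \<bar>u\<bar> \<or> e/2 < \<bar>v\<bar>" if "e < \<bar>u + v\<bar>" for u v :: real
    using that by linarith
  then have "\<forall>\<^sub>F n in sequentially. measure (M n) {w \<in> space (M n). e < \<bar>X n w + Y n w\<bar>} < b/2 + b/2"
    using \<open>e > 0\<close> \<open>b > 0\<close>
    by (intro eventually_measure_less_if_cover[OF _ vanishes_in_probD[OF X, of "e/2"]
          vanishes_in_probD[OF Y, of "e/2"]] always_eventually) auto
  then show "\<forall>\<^sub>F n in sequentially. measure (M n) {w \<in> space (M n). e < \<bar>X n w + Y n w\<bar>} < b"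
    by simp
qed

lemma vanishes_in_prob_minus:
  "vanishes_in_prob M X \<Longrightarrow> vanishes_in_prob M (\<lambda>n w. - X n w)"
  by (simp add: vanishes_in_prob_def)

lemma vanishes_in_prob_diff:
  "vanishes_in_prob M X \<Longrightarrow> vanishes_in_prob M Y \<Longrightarrow> vanishes_in_prob M (\<lambda>n w. X n w - Y n w)"
  using vanishes_in_prob_add[of X "\<lambda>n w. - Y n w"] vanishes_in_prob_minus by simp

lemma bounded_in_prob_diff:
  assumes X: "bounded_in_prob M X" and Y: "bounded_in_prob M Y"
  shows "bounded_in_prob M (\<lambda>n w. X n w - Y n w)"
proof (rule bounded_in_probI)
  show "\<forall>\<^sub>F n in sequentially. (\<lambda>w. X n w - Y n w) \<in> borel_measurable (M n)"
    using bounded_in_prob_measurable[OF X] bounded_in_prob_measurable[OF Y] by eventually_elim auto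
  fix b :: real assume "b > 0"
  then have "b/2 > 0" by simp
  obtain K1 where K1: "K1 > 0" "\<forall>\<^sub>F n in sequentially. {w \<in> space (M n). K1 < \<bar>X n w\<bar>} \<in> sets (M n) \<and>
       measure (M n) {w \<in> space (M n). K1 < \<bar>X n w\<bar>} < b/2"
    by (rule bounded_in_probD[OF X \<open>b/2 > 0\<close>])
  obtain K2 where K2: "K2 > 0" "\<forall>\<^sub>F n in sequentially. {w \<in> space (M n). K2 < \<bar>Y n w\<bar>} \<in> sets (M n) \<and>
       measure (M n) {w \<in> space (M n). K2 < \<bar>Y n w\<bar>} < b/2"
    by (rule bounded_in_probD[OF Y \<open>b/2 > 0\<close>])
  have "K1 < \<bar>u\<bar> \<or> K2 < \<bar>v\<bar>" if "K1 + K2 < \<bar>u - v\<bar>" for u v :: real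
    using that by linarith
  then have "\<forall>\<^sub>F n in sequentially. measure (M n) {w \<in> space (M n). K1 + K2 < \<bar>X n w - Y n w\<bar>} < b/2 + b/2"
    by (intro eventually_measure_less_if_cover[OF _ K1(2) K2(2)] always_eventually) auto
  then show "\<exists>K. \<forall>\<^sub>F n in sequentially. measure (M n) {w \<in> space (M n). K < \<bar>X n w - Y n w\<bar>} < b"
    by auto
qed

lemma bounded_in_prob_mult:
  assumes X: "bounded_in_prob M X" and Y: "bounded_in_prob M Y"
  shows "bounded_in_prob M (\<lambda>n w. X n w * Y n w)"
proof (rule bounded_in_probI)
  show "\<forall>\<^sub>F n in sequentially. (\<lambda>w. X n w * Y n w) \<in> borel_measurable (M n)"
    using bounded_in_prob_measurable[OF X] bounded_in_prob_measurable[OF Y] by eventually_elim auto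
  fix b :: real assume "b > 0"
  then have "b/2 > 0" by simp
  obtain K1 where K1: "K1 > 0" "\<forall>\<^sub>F n in sequentially. {w \<in> space (M n). K1 < \<bar>X n w\<bar>} \<in> sets (M n) \<and>
       measure (M n) {w \<in> space (M n). K1 < \<bar>X n w\<bar>} < b/2"
    by (rule bounded_in_probD[OF X \<open>b/2 > 0\<close>])
  obtain K2 where K2: "K2 > 0" "\<forall>\<^sub>F n in sequentially. {w \<in> space (M n). K2 < \<bar>Y n w\<bar>} \<in> sets (M n) \<and>
       measure (M n) {w \<in> space (M n). K2 < \<bar>Y n w\<bar>} < b/2"
    by (rule bounded_in_probD[OF Y \<open>b/2 > 0\<close>])
  have "K1 < \<bar>u\<bar> \<or> K2 < \<bar>v\<bar>" if "K1 * K2 < \<bar>u * v\<bar>" for u v :: real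
    using that K1(1) K2(1) mult_mono[of "\<bar>u\<bar>" K1 "\<bar>v\<bar>" K2] by (force simp: abs_mult)
  then have "\<forall>\<^sub>F n in sequentially. measure (M n) {w \<in> space (M n). K1 * K2 < \<bar>X n w * Y n w\<bar>} < b/2 + b/2"
    by (intro eventually_measure_less_if_cover[OF _ K1(2) K2(2)] always_eventually) auto
  then show "\<exists>K. \<forall>\<^sub>F n in sequentially. measure (M n) {w \<in> space (M n). K < \<bar>X n w * Y n w\<bar>} < b"
    by auto
qed

lemma vanishes_in_prob_mult_bounded:
  assumes X: "vanishes_in_prob M X" and Y: "bounded_in_prob M Y"
  shows "vanishes_in_prob M (\<lambda>n w. X n w * Y n w)"
proof (rule vanishes_in_probI)
  show "\<forall>\<^sub>F n in sequentially. (\<lambda>w. X n w * Y n w) \<in> borel_measurable (M n)"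
    using vanishes_in_prob_measurable[OF X] bounded_in_prob_measurable[OF Y] by eventually_elim auto
  fix e b :: real assume "e > 0" "b > 0"
  then have "b/2 > 0" by simp
  obtain K where K: "K > 0" "\<forall>\<^sub>F n in sequentially. {w \<in> space (M n). K < \<bar>Y n w\<bar>} \<in> sets (M n) \<and>
       measure (M n) {w \<in> space (M n). K < \<bar>Y n w\<bar>} < b/2"
    by (rule bounded_in_probD[OF Y \<open>b/2 > 0\<close>])
  have "e / K < \<bar>u\<bar> \<or> K < \<bar>v\<bar>" if "e < \<bar>u * v\<bar>" for u v :: real
    using that K(1) mult_left_mono[of "\<bar>v\<bar>" K "\<bar>u\<bar>"] by (force simp: abs_mult divide_less_eq)
  then have "\<forall>\<^sub>F n in sequentially. measure (M n) {w \<in> space (M n). e < \<bar>X n w * Y n w\<bar>} < b/2 + b/2"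
    using K \<open>e > 0\<close> \<open>b > 0\<close>
    by (intro eventually_measure_less_if_cover[OF _ vanishes_in_probD[OF X, of "e/K"] K(2)]
        always_eventually) auto
  then show "\<forall>\<^sub>F n in sequentially. measure (M n) {w \<in> space (M n). e < \<bar>X n w * Y n w\<bar>} < b"
    by simp
qed

lemma bounded_mult_vanishes_in_prob:
  "bounded_in_prob M X \<Longrightarrow> vanishes_in_prob M Y \<Longrightarrow> vanishes_in_prob M (\<lambda>n w. X n w * Y n w)"
  using vanishes_in_prob_mult_bounded[of Y X] by (simp add: mult.commute)


lemma vanishes_in_prob_const:
  assumes "c \<longlonglongrightarrow> 0"
  shows "vanishes_in_prob M (\<lambda>n w. c n)"
proof (rule vanishes_in_probI)
  fix e b :: real assume "e > 0" "b > 0"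
  have "\<forall>\<^sub>F n in sequentially. \<bar>c n\<bar> < e"
    using order_tendstoD(2)[OF tendsto_rabs_zero[OF assms] \<open>e > 0\<close>] .
  then show "\<forall>\<^sub>F n in sequentially. measure (M n) {w \<in> space (M n). e < \<bar>c n\<bar>} < b"
    by eventually_elim (use \<open>b > 0\<close> in auto)
qed simp

lemma bounded_in_prob_const:
  assumes "Bseq c"
  shows "bounded_in_prob M (\<lambda>n w. c n)"
proof (rule bounded_in_probI)
  obtain K where "\<And>n. \<bar>c n\<bar> \<le> K"
    using assms by (auto simp: Bseq_def)
  then show "\<exists>K. \<forall>\<^sub>F n in sequentially. measure (M n) {w \<in> space (M n). K < \<bar>c n\<bar>} < b"
    if "b > 0" for b
    using that by (intro exI[of _ K] always_eventually allI) (simp add: not_less[symmetric])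
qed simp

lemma bounded_if_vanishes_in_prob:
  assumes "vanishes_in_prob M X"
  shows "bounded_in_prob M X"
proof (rule bounded_in_probI)
  show "\<exists>K. \<forall>\<^sub>F n in sequentially. measure (M n) {w \<in> space (M n). K < \<bar>X n w\<bar>} < b"
    if "b > 0" for b
    using vanishes_in_probD[OF assms zero_less_one that] by (auto elim: eventually_mono)
qed (rule vanishes_in_prob_measurable[OF assms])

lemma vanishes_in_prob_cong:
  assumes Y: "vanishes_in_prob M Y"
    and eq: "\<forall>\<^sub>F n in sequentially. \<forall>w\<in>space (M n). X n w = Y n w"
  shows "vanishes_in_prob M X"
proof (rule vanishes_in_probI)
  show "\<forall>\<^sub>F n in sequentially. X n \<in> borel_measurable (M n)"
    using vanishes_in_prob_measurable[OF Y] eq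
    by eventually_elim (simp cong: measurable_cong)
  fix e b :: real assume "e > 0" "b > 0"
  have "\<forall>\<^sub>F n in sequentially. {w \<in> space (M n). e < \<bar>X n w\<bar>} = {w \<in> space (M n). e < \<bar>Y n w\<bar>}"
    using eq by eventually_elim auto
  with vanishes_in_probD[OF Y \<open>e > 0\<close> \<open>b > 0\<close>]
  show "\<forall>\<^sub>F n in sequentially. measure (M n) {w \<in> space (M n). e < \<bar>X n w\<bar>} < b"
    by eventually_elim simp
qed

lemma vanishes_in_prob_if_scaled:
  assumes r: "\<forall>\<^sub>F n in sequentially. 1 \<le> r n"
    and X: "vanishes_in_prob M (\<lambda>n w. r n * X n w)"
  shows "vanishes_in_prob M X"
proof (rule vanishes_in_prob_cong)
  have "bounded_in_prob M (\<lambda>n w. 1 / r n)"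
    using r by (intro bounded_in_prob_const BfunI[of _ 1]) (auto elim: eventually_mono)
  then show "vanishes_in_prob M (\<lambda>n w. 1 / r n * (r n * X n w))"
    by (rule bounded_mult_vanishes_in_prob[OF _ X])
  show "\<forall>\<^sub>F n in sequentially. \<forall>w\<in>space (M n). X n w = 1 / r n * (r n * X n w)"
    using r by eventually_elim simp
qed

lemma measure_exceeds_tendsto_zero_if_dominated:
  assumes Y: "vanishes_in_prob M Y"
    and B: "\<forall>\<^sub>F n in sequentially. B n \<in> sets (M n)" "(\<lambda>n. measure (M n) (B n)) \<longlonglongrightarrow> 0"
    and dom: "\<forall>\<^sub>F n in sequentially. \<forall>w \<in> space (M n) - B n. f n w \<le> \<bar>Y n w\<bar>"
    and "e > 0"
  shows "(\<lambda>n. measure (M n) {w \<in> space (M n). e < f n w}) \<longlonglongrightarrow> 0"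
proof (rule measure_tendsto_zeroI)
  fix b :: real assume "b > 0"
  have "\<forall>\<^sub>F n in sequentially. B n \<in> sets (M n) \<and> measure (M n) (B n) < b/2"
    using B(1) order_tendstoD(2)[OF B(2) half_gt_zero[OF \<open>b > 0\<close>]] by eventually_elim auto
  moreover have "\<forall>\<^sub>F n in sequentially. {w \<in> space (M n). e < f n w} \<subseteq> {w \<in> space (M n). e < \<bar>Y n w\<bar>} \<union> B n"
    using dom by eventually_elim force
  ultimately have "\<forall>\<^sub>F n in sequentially. measure (M n) {w \<in> space (M n). e < f n w} < b/2 + b/2"
    using \<open>e > 0\<close> \<open>b > 0\<close> by (intro eventually_measure_less_if_cover[OF _ vanishes_in_probD[OF Y]]) auto
  then show "\<forall>\<^sub>F n in sequentially. measure (M n) {w \<in> space (M n). e < f n w} < b"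
    by simp
qed

lemma vanishes_in_prob_if_eq_off_small_sets:
  assumes "vanishes_in_prob M Y"
    and "\<forall>\<^sub>F n in sequentially. X n \<in> borel_measurable (M n)"
    and "\<forall>\<^sub>F n in sequentially. B n \<in> sets (M n)" "(\<lambda>n. measure (M n) (B n)) \<longlonglongrightarrow> 0"
    and eq: "\<forall>\<^sub>F n in sequentially. \<forall>w \<in> space (M n) - B n. X n w = Y n w"
  shows "vanishes_in_prob M X"
  unfolding vanishes_in_prob_def
proof (intro conjI allI impI)
  have "\<forall>\<^sub>F n in sequentially. \<forall>w \<in> space (M n) - B n. \<bar>X n w\<bar> \<le> \<bar>Y n w\<bar>"
    using eq by eventually_elim simp
  then show "(\<lambda>n. measure (M n) {w \<in> space (M n). e < \<bar>X n w\<bar>}) \<longlonglongrightarrow> 0" if "e > 0" for e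
    using assms that by (intro measure_exceeds_tendsto_zero_if_dominated) auto
qed fact

lemma vanishes_in_prob_norm_Pair:
  assumes Y1: "vanishes_in_prob M Y1" and Y2: "vanishes_in_prob M Y2"
  shows "vanishes_in_prob M (\<lambda>n w. norm (Y1 n w, Y2 n w))"
proof (rule vanishes_in_probI)
  show "\<forall>\<^sub>F n in sequentially. (\<lambda>w. norm (Y1 n w, Y2 n w)) \<in> borel_measurable (M n)"
    using vanishes_in_prob_measurable[OF Y1] vanishes_in_prob_measurable[OF Y2]
    by eventually_elim (simp add: norm_Pair)
  fix e b :: real assume "e > 0" "b > 0"
  have "e/2 < \<bar>u\<bar> \<or> e/2 < \<bar>v\<bar>" if "e < norm (u, v)" for u v :: real
    using that norm_Pair_le[of u v] unfolding real_norm_def by linarith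
  then have "\<forall>\<^sub>F n in sequentially. measure (M n) {w \<in> space (M n). e < \<bar>norm (Y1 n w, Y2 n w)\<bar>} < b/2 + b/2"
    using \<open>e > 0\<close> \<open>b > 0\<close>
    by (intro eventually_measure_less_if_cover[OF _ vanishes_in_probD[OF Y1, of "e/2"]
          vanishes_in_probD[OF Y2, of "e/2"]] always_eventually) auto
  then show "\<forall>\<^sub>F n in sequentially. measure (M n) {w \<in> space (M n). e < \<bar>norm (Y1 n w, Y2 n w)\<bar>} < b"
    by simp
qed

lemma conv_in_prob_zero_if_eq_Pair_off_small_sets:
  assumes "vanishes_in_prob M Y1" "vanishes_in_prob M Y2"
    and "\<forall>\<^sub>F n in sequentially. B n \<in> sets (M n)" "(\<lambda>n. measure (M n) (B n)) \<longlonglongrightarrow> 0"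
    and eq: "\<forall>\<^sub>F n in sequentially. \<forall>w \<in> space (M n) - B n. X n w = (Y1 n w, Y2 n w)"
  shows "conv_in_prob M X 0"
  unfolding conv_in_prob_def
proof (intro allI impI)
  have "\<forall>\<^sub>F n in sequentially. \<forall>w \<in> space (M n) - B n. dist (X n w) 0 \<le> \<bar>norm (Y1 n w, Y2 n w)\<bar>"
    using eq by eventually_elim simp
  then show "(\<lambda>n. measure (M n) {w \<in> space (M n). dist (X n w) 0 > e}) \<longlonglongrightarrow> 0" if "e > 0" for e
    using assms that
    by (intro measure_exceeds_tendsto_zero_if_dominated[OF vanishes_in_prob_norm_Pair]) auto
qed

lemma vanishes_in_prob_divide:
  assumes W: "vanishes_in_prob M W" and V: "vanishes_in_prob M (\<lambda>n w. V n w - v n)"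
    and v: "v \<longlonglongrightarrow> v0" "v0 \<noteq> 0"
  shows "vanishes_in_prob M (\<lambda>n w. W n w / V n w)"
proof (rule vanishes_in_probI)
  have "\<forall>\<^sub>F n in sequentially. V n \<in> borel_measurable (M n)"
    using vanishes_in_prob_measurable[OF V]
  proof eventually_elim
    case (elim n)
    then have "(\<lambda>w. (V n w - v n) + v n) \<in> borel_measurable (M n)"
      by (intro borel_measurable_add) auto
    then show ?case by simp
  qed
  with vanishes_in_prob_measurable[OF W]
  show "\<forall>\<^sub>F n in sequentially. (\<lambda>w. W n w / V n w) \<in> borel_measurable (M n)"
    by eventually_elim auto
  fix e b :: real assume "e > 0" "b > 0"
  define c where "c = \<bar>v0\<bar> / 4"
  have "c > 0" "2 * c < \<bar>v0\<bar>" using v(2) by (simp_all add: c_def)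
  have "\<forall>\<^sub>F n in sequentially. 2 * c < \<bar>v n\<bar>"
    using order_tendstoD(1)[OF tendsto_rabs[OF v(1)] \<open>2 * c < \<bar>v0\<bar>\<close>] .
  then have "\<forall>\<^sub>F n in sequentially. {w \<in> space (M n). e < \<bar>W n w / V n w\<bar>} \<subseteq>
      {w \<in> space (M n). e * c < \<bar>W n w\<bar>} \<union> {w \<in> space (M n). c < \<bar>V n w - v n\<bar>}"
  proof eventually_elim
    case (elim n)
    have "e * c < \<bar>W n w\<bar>" if "e < \<bar>W n w / V n w\<bar>" "c \<le> \<bar>V n w\<bar>" for w
    proof -
      have "e * \<bar>V n w\<bar> < \<bar>W n w\<bar>"
        using that \<open>c > 0\<close> by (simp add: abs_divide pos_less_divide_eq)
      moreover have "e * c \<le> e * \<bar>V n w\<bar>"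
        using that \<open>e > 0\<close> by simp
      ultimately show ?thesis by linarith
    qed
    with elim show ?case by force
  qed
  then have "\<forall>\<^sub>F n in sequentially. measure (M n) {w \<in> space (M n). e < \<bar>W n w / V n w\<bar>} < b/2 + b/2"
    using \<open>e > 0\<close> \<open>c > 0\<close> \<open>b > 0\<close>
    by (intro eventually_measure_less_if_cover[OF _ vanishes_in_probD[OF W, of "e * c"]
          vanishes_in_probD[OF V, of c]]) auto
  then show "\<forall>\<^sub>F n in sequentially. measure (M n) {w \<in> space (M n). e < \<bar>W n w / V n w\<bar>} < b"
    by simp
qed

lemma vanishes_in_prob_rate_mult_perturbation:
  assumes r: "\<forall>\<^sub>F n in sequentially. 1 \<le> r n"
    and A: "bounded_in_prob M A" and B: "bounded_in_prob M B"
    and dA: "vanishes_in_prob M (\<lambda>n w. r n * dA n w)"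
    and dB: "vanishes_in_prob M (\<lambda>n w. r n * dB n w)"
  shows "vanishes_in_prob M (\<lambda>n w. r n * ((A n w + dA n w) * (B n w + dB n w) - A n w * B n w))"
proof (rule vanishes_in_prob_cong)
  have "bounded_in_prob M dB"
    by (rule bounded_if_vanishes_in_prob[OF vanishes_in_prob_if_scaled[OF r dB]])
  then show "vanishes_in_prob M
      (\<lambda>n w. A n w * (r n * dB n w) + (r n * dA n w) * B n w + (r n * dA n w) * dB n w)"
    using bounded_mult_vanishes_in_prob[OF A dB] vanishes_in_prob_mult_bounded[OF dA B]
      vanishes_in_prob_mult_bounded[OF dA] by (intro vanishes_in_prob_add)
qed (simp add: algebra_simps)

lemma vanishes_in_prob_if_eq_where_close:
  assumes Y: "vanishes_in_prob M Y"
    and X: "\<forall>\<^sub>F n in sequentially. X n \<in> borel_measurable (M n)"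
    and D: "vanishes_in_prob M D" and "c > 0"
    and eq: "\<forall>\<^sub>F n in sequentially. \<forall>w \<in> space (M n). \<bar>D n w\<bar> \<le> c \<longrightarrow> X n w = Y n w"
  shows "vanishes_in_prob M X"
proof (rule vanishes_in_prob_if_eq_off_small_sets[OF Y X])
  show "\<forall>\<^sub>F n in sequentially. {w \<in> space (M n). c < \<bar>D n w\<bar>} \<in> sets (M n)"
    using vanishes_in_prob_measurable[OF D] by eventually_elim (rule sets_abs_gt)
  show "(\<lambda>n. measure (M n) {w \<in> space (M n). c < \<bar>D n w\<bar>}) \<longlonglongrightarrow> 0"
    using D \<open>c > 0\<close> by (simp add: vanishes_in_prob_def)
  show "\<forall>\<^sub>F n in sequentially. \<forall>w \<in> space (M n) - {w \<in> space (M n). c < \<bar>D n w\<bar>}. X n w = Y n w"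
    using eq by eventually_elim auto
qed

lemma vanishes_in_prob_rate_divide:
  fixes r Q :: "nat \<Rightarrow> real"
  assumes r: "\<forall>\<^sub>F n in sequentially. 1 \<le> r n"
    and P': "vanishes_in_prob M (\<lambda>n w. r n * (P' n w - P n w))"
    and Q': "vanishes_in_prob M (\<lambda>n w. r n * (Q' n w - Q n))"
    and P: "bounded_in_prob M P"
    and Q: "Q \<longlonglongrightarrow> q0" "q0 \<noteq> 0"
  shows "vanishes_in_prob M (\<lambda>n w. r n * (P' n w / Q' n w - P n w / Q n))"
proof -
  have Q_bounded: "bounded_in_prob M (\<lambda>n w. Q n)"
    using Q(1) by (intro bounded_in_prob_const convergent_imp_Bseq convergentI)
  have dP: "vanishes_in_prob M (\<lambda>n w. P' n w - P n w)" and dQ: "vanishes_in_prob M (\<lambda>n w. Q' n w - Q n)"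
    by (rule vanishes_in_prob_if_scaled[OF r P'], rule vanishes_in_prob_if_scaled[OF r Q'])
  have num: "vanishes_in_prob M (\<lambda>n w. r n * (P' n w - P n w) * Q n - P n w * (r n * (Q' n w - Q n)))"
    by (intro vanishes_in_prob_diff vanishes_in_prob_mult_bounded[OF P' Q_bounded]
        bounded_mult_vanishes_in_prob[OF P Q'])
  have den: "vanishes_in_prob M (\<lambda>n w. Q n * Q' n w - (Q n)\<^sup>2)"
    by (rule vanishes_in_prob_cong[OF bounded_mult_vanishes_in_prob[OF Q_bounded dQ]])
      (simp add: power2_eq_square right_diff_distrib)
  have quotient: "vanishes_in_prob M (\<lambda>n w.
      (r n * (P' n w - P n w) * Q n - P n w * (r n * (Q' n w - Q n))) / (Q n * Q' n w))"
    using Q by (intro vanishes_in_prob_divide[OF num den, of "q0\<^sup>2"] tendsto_power) auto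
  have meas: "\<forall>\<^sub>F n in sequentially. (\<lambda>w. r n * (P' n w / Q' n w - P n w / Q n)) \<in> borel_measurable (M n)"
    using vanishes_in_prob_measurable[OF dP] vanishes_in_prob_measurable[OF dQ] bounded_in_prob_measurable[OF P]
  proof eventually_elim
    case (elim n)
    have "(\<lambda>w. (P' n w - P n w) + P n w) \<in> borel_measurable (M n)"
      using elim by (intro borel_measurable_add) auto
    moreover have "(\<lambda>w. (Q' n w - Q n) + Q n) \<in> borel_measurable (M n)"
      using elim by (intro borel_measurable_add) auto
    ultimately show ?case
      using elim by simp
  qed
  define c where "c = \<bar>q0\<bar> / 2"
  have "c > 0" "c < \<bar>q0\<bar>" using Q(2) by (simp_all add: c_def)
  have "\<forall>\<^sub>F n in sequentially. \<forall>w \<in> space (M n). \<bar>Q' n w - Q n\<bar> \<le> c \<longrightarrow>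
      r n * (P' n w / Q' n w - P n w / Q n) =
      (r n * (P' n w - P n w) * Q n - P n w * (r n * (Q' n w - Q n))) / (Q n * Q' n w)"
    using order_tendstoD(1)[OF tendsto_rabs[OF Q(1)] \<open>c < \<bar>q0\<bar>\<close>]
    by eventually_elim (use \<open>c > 0\<close> in \<open>auto intro!: scaled_quotient_diff_eq\<close>)
  then show ?thesis
    by (rule vanishes_in_prob_if_eq_where_close[OF quotient meas dQ \<open>c > 0\<close>])
qed

end

definition ols_from_moments :: "real \<Rightarrow> real \<Rightarrow> real \<Rightarrow> real \<Rightarrow> real \<times> real" where
  "ols_from_moments mx my mxx mxy =
     ((my * mxx - mx * mxy) / (mxx - mx\<^sup>2), (mxy - mx * my) / (mxx - mx\<^sup>2))"

context prob_space_sequence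
begin

lemma vanishes_in_prob_ols_from_moments_perturbation:
  fixes r mx mxx :: "nat \<Rightarrow> real" and my mxy ex ey exx exy :: "nat \<Rightarrow> 'a \<Rightarrow> real"
  assumes r: "\<forall>\<^sub>F n in sequentially. 1 \<le> r n"
    and mx: "mx \<longlonglongrightarrow> cx" and mxx: "mxx \<longlonglongrightarrow> cxx" and nondegenerate: "cxx \<noteq> cx\<^sup>2"
    and my: "bounded_in_prob M my" and mxy: "bounded_in_prob M mxy"
    and ex: "vanishes_in_prob M (\<lambda>n w. r n * ex n w)"
    and ey: "vanishes_in_prob M (\<lambda>n w. r n * ey n w)"
    and exx: "vanishes_in_prob M (\<lambda>n w. r n * exx n w)"
    and exy: "vanishes_in_prob M (\<lambda>n w. r n * exy n w)"
  defines "est n w \<equiv> ols_from_moments (mx n) (my n w) (mxx n) (mxy n w)"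
    and "est' n w \<equiv> ols_from_moments (mx n + ex n w) (my n w + ey n w) (mxx n + exx n w) (mxy n w + exy n w)"
  shows "vanishes_in_prob M (\<lambda>n w. r n * (fst (est' n w) - fst (est n w)))"
    and "vanishes_in_prob M (\<lambda>n w. r n * (snd (est' n w) - snd (est n w)))"
proof -
  have mx_bounded: "bounded_in_prob M (\<lambda>n w. mx n)" and mxx_bounded: "bounded_in_prob M (\<lambda>n w. mxx n)"
    using mx mxx by (auto intro!: bounded_in_prob_const convergent_imp_Bseq convergentI)
  define Q where "Q n = mxx n - (mx n)\<^sup>2" for n
  define Q' where "Q' n w = (mxx n + exx n w) - (mx n + ex n w)\<^sup>2" for n w
  define P where "P n w = mxy n w - mx n * my n w" for n w
  define P' where "P' n w = (mxy n w + exy n w) - (mx n + ex n w) * (my n w + ey n w)" for n w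
  define R where "R n w = my n w * mxx n - mx n * mxy n w" for n w
  define R' where "R' n w = (my n w + ey n w) * (mxx n + exx n w) - (mx n + ex n w) * (mxy n w + exy n w)" for n w
  have Q: "Q \<longlonglongrightarrow> cxx - cx\<^sup>2" "cxx - cx\<^sup>2 \<noteq> 0"
    unfolding Q_def using mx mxx nondegenerate by (auto intro!: tendsto_intros)
  have dQ: "vanishes_in_prob M (\<lambda>n w. r n * (Q' n w - Q n))"
    using vanishes_in_prob_diff[OF exx vanishes_in_prob_rate_mult_perturbation[OF r mx_bounded mx_bounded ex ex]]
    by (simp add: Q_def Q'_def power2_eq_square algebra_simps)
  have dP: "vanishes_in_prob M (\<lambda>n w. r n * (P' n w - P n w))"
    using vanishes_in_prob_diff[OF exy vanishes_in_prob_rate_mult_perturbation[OF r mx_bounded my ex ey]]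
    by (simp add: P_def P'_def algebra_simps)
  have dR: "vanishes_in_prob M (\<lambda>n w. r n * (R' n w - R n w))"
    using vanishes_in_prob_diff[OF vanishes_in_prob_rate_mult_perturbation[OF r my mxx_bounded ey exx]
        vanishes_in_prob_rate_mult_perturbation[OF r mx_bounded mxy ex exy]]
    by (simp add: R_def R'_def algebra_simps)
  have P_bounded: "bounded_in_prob M P" and R_bounded: "bounded_in_prob M R"
    unfolding P_def R_def
    by (intro bounded_in_prob_diff bounded_in_prob_mult mx_bounded mxx_bounded my mxy)+
  have "vanishes_in_prob M (\<lambda>n w. r n * (R' n w / Q' n w - R n w / Q n))"
    by (rule vanishes_in_prob_rate_divide[OF r dR dQ R_bounded Q])
  moreover have "vanishes_in_prob M (\<lambda>n w. r n * (P' n w / Q' n w - P n w / Q n))"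
    by (rule vanishes_in_prob_rate_divide[OF r dP dQ P_bounded Q])
  ultimately show "vanishes_in_prob M (\<lambda>n w. r n * (fst (est' n w) - fst (est n w)))"
    and "vanishes_in_prob M (\<lambda>n w. r n * (snd (est' n w) - snd (est n w)))"
    by (simp_all add: est_def est'_def ols_from_moments_def P_def P'_def Q_def Q'_def R_def R'_def)
qed

end

section \<open>Tail bounds for Gaussian averages\<close>

lemma (in prob_space) normal_tail_bound:
  assumes D: "distributed M lborel X (\<lambda>t. ennreal (normal_density \<mu> \<sigma> t))"
    and "\<sigma> > 0" and "\<bar>\<mu>\<bar> < K"
  shows "prob {w \<in> space M. K < \<bar>X w\<bar>} \<le> \<sigma>\<^sup>2 / (K - \<bar>\<mu>\<bar>)\<^sup>2"
proof -
  have [measurable]: "X \<in> borel_measurable M"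
    using distributed_measurable[OF D] by simp
  have eq: "(\<lambda>t. normal_density \<mu> \<sigma> t * t\<^sup>2) = (\<lambda>t. normal_density \<mu> \<sigma> t * (t - \<mu>) ^ 2
      + 2 * \<mu> * (normal_density \<mu> \<sigma> t * (t - \<mu>) ^ 1) + \<mu>\<^sup>2 * normal_density \<mu> \<sigma> t)"
    by (auto simp: fun_eq_iff power2_eq_square algebra_simps)
  have "integrable lborel (\<lambda>t. normal_density \<mu> \<sigma> t * t\<^sup>2)"
    unfolding eq by (intro Bochner_Integration.integrable_add integrable_mult_right
        integrable_normal_moment integrable_normal_density) (simp_all add: \<open>\<sigma> > 0\<close>)
  then have "integrable M (\<lambda>w. (X w)\<^sup>2)"
    using distributed_integrable[OF D, of "\<lambda>t. t\<^sup>2"] by simp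
  have "prob {w \<in> space M. K < \<bar>X w\<bar>} \<le> prob {w \<in> space M. K - \<bar>\<mu>\<bar> \<le> \<bar>X w - expectation X\<bar>}"
    using normal_distributed_expectation[OF \<open>\<sigma> > 0\<close> D] by (intro finite_measure_mono) auto
  also have "\<dots> \<le> variance X / (K - \<bar>\<mu>\<bar>)\<^sup>2"
    using \<open>integrable M (\<lambda>w. (X w)\<^sup>2)\<close> \<open>\<bar>\<mu>\<bar> < K\<close> by (intro Chebyshev_inequality) auto
  finally show ?thesis
    using normal_distributed_variance[OF \<open>\<sigma> > 0\<close> D] by simp
qed

lemma (in prob_space) indep_normal_weighted_sum_tail_bound:
  fixes Y :: "'i \<Rightarrow> 'a \<Rightarrow> real"
  assumes "finite I" and indep: "indep_vars (\<lambda>_. borel) Y I"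
    and D: "\<And>i. i \<in> I \<Longrightarrow> distributed M lborel (Y i) (\<lambda>t. ennreal (normal_density (m i) s t))"
    and "s > 0" and K: "\<bar>\<Sum>i\<in>I. w i * m i\<bar> < K"
  shows "prob {x \<in> space M. K < \<bar>\<Sum>i\<in>I. w i * Y i x\<bar>} \<le>
    s\<^sup>2 * (\<Sum>i\<in>I. (w i)\<^sup>2) / (K - \<bar>\<Sum>i\<in>I. w i * m i\<bar>)\<^sup>2"
proof -
  define J where "J = {i \<in> I. w i \<noteq> 0}"
  have J: "finite J" "J \<subseteq> I" using \<open>finite I\<close> by (auto simp: J_def)
  have sum_J: "(\<Sum>i\<in>I. f i) = (\<Sum>i\<in>J. f i)" if "\<And>i. w i = 0 \<Longrightarrow> f i = 0" for f :: "'i \<Rightarrow> real"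
    using \<open>finite I\<close> that unfolding J_def by (intro sum.mono_neutral_right) auto
  show ?thesis
  proof (cases "J = {}")
    case True
    then have "{x \<in> space M. K < \<bar>\<Sum>i\<in>I. w i * Y i x\<bar>} = {}"
      using K sum_J[of "\<lambda>i. w i * Y i _"] sum_J[of "\<lambda>i. w i * m i"] by auto
    moreover have "0 \<le> s\<^sup>2 * (\<Sum>i\<in>I. (w i)\<^sup>2) / (K - \<bar>\<Sum>i\<in>I. w i * m i\<bar>)\<^sup>2"
      by (intro divide_nonneg_nonneg mult_nonneg_nonneg sum_nonneg) auto
    ultimately show ?thesis by (simp only: measure_empty)
  next
    case False
    have "distributed M lborel (\<lambda>x. \<Sum>i\<in>J. w i * Y i x)
        (normal_density (\<Sum>i\<in>J. w i * m i) (sqrt (\<Sum>i\<in>J. (\<bar>w i\<bar> * s)\<^sup>2)))"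
    proof (rule sum_indep_normal[OF J(1) False])
      show "indep_vars (\<lambda>_. borel) (\<lambda>i x. w i * Y i x) J"
        by (rule indep_vars_compose2[OF indep_vars_subset[OF indep J(2)]]) auto
      show "distributed M lborel (\<lambda>x. w i * Y i x) (normal_density (w i * m i) (\<bar>w i\<bar> * s))"
        if "i \<in> J" for i
        using normal_density_affine[OF D \<open>s > 0\<close>, of i "w i" 0] that J(2) by (auto simp: J_def)
    qed (use \<open>s > 0\<close> in \<open>auto simp: J_def\<close>)
    moreover have "(\<Sum>i\<in>J. (\<bar>w i\<bar> * s)\<^sup>2) = s\<^sup>2 * (\<Sum>i\<in>I. (w i)\<^sup>2)"
      by (simp add: sum_J[of "\<lambda>i. (w i)\<^sup>2"] sum_distrib_left power_mult_distrib mult.commute)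
    moreover have "0 < (\<Sum>i\<in>J. (\<bar>w i\<bar> * s)\<^sup>2)"
      using False J(1) \<open>s > 0\<close> by (intro sum_pos) (auto simp: J_def)
    ultimately show ?thesis
      using K sum_J[of "\<lambda>i. w i * Y i _"] sum_J[of "\<lambda>i. w i * m i"]
      by (auto dest!: normal_tail_bound)
  qed
qed

lemma (in prob_space) indep_normal_avg_tail_bound:
  fixes Y :: "nat \<Rightarrow> 'a \<Rightarrow> real"
  assumes indep: "indep_vars (\<lambda>_. borel) Y {..<n}"
    and D: "\<And>i. i < n \<Longrightarrow> distributed M lborel (Y i) (\<lambda>t. ennreal (normal_density (m i) s t))"
    and "s > 0" "n > 0"
    and mean: "\<bar>avg n (\<lambda>i. u i * m i)\<bar> \<le> B" and second_moment: "avg n (\<lambda>i. (u i)\<^sup>2) \<le> B"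
    and "B < K"
  shows "prob {w \<in> space M. K < \<bar>avg n (\<lambda>i. u i * Y i w)\<bar>} \<le> s\<^sup>2 * B / (K - B)\<^sup>2"
proof -
  have avg_eq: "avg n (\<lambda>i. u i * f i) = (\<Sum>i<n. u i / real n * f i)" for f
    by (simp add: avg_def sum_divide_distrib)
  have "(\<Sum>i<n. (u i / real n)\<^sup>2) = avg n (\<lambda>i. (u i)\<^sup>2) / real n"
    by (simp add: avg_def power_divide sum_divide_distrib power2_eq_square)
  also have "\<dots> \<le> avg n (\<lambda>i. (u i)\<^sup>2)"
    using \<open>n > 0\<close> sum_nonneg[of "{..<n}" "\<lambda>i. (u i)\<^sup>2"]
    by (simp add: avg_def divide_le_eq mult_le_cancel_left1)
  finally have "s\<^sup>2 * (\<Sum>i<n. (u i / real n)\<^sup>2) \<le> s\<^sup>2 * B"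
    using second_moment by (simp add: mult_left_mono)
  moreover have "(K - B)\<^sup>2 \<le> (K - \<bar>avg n (\<lambda>i. u i * m i)\<bar>)\<^sup>2"
    using mean \<open>B < K\<close> by (intro power_mono) auto
  moreover have "0 \<le> B"
    using mean by linarith
  ultimately have "s\<^sup>2 * (\<Sum>i<n. (u i / real n)\<^sup>2) / (K - \<bar>avg n (\<lambda>i. u i * m i)\<bar>)\<^sup>2
      \<le> s\<^sup>2 * B / (K - B)\<^sup>2"
    using \<open>B < K\<close> by (intro frac_le) auto
  moreover have "prob {w \<in> space M. K < \<bar>avg n (\<lambda>i. u i * Y i w)\<bar>} \<le>
      s\<^sup>2 * (\<Sum>i<n. (u i / real n)\<^sup>2) / (K - \<bar>avg n (\<lambda>i. u i * m i)\<bar>)\<^sup>2"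
    using indep D mean \<open>B < K\<close> \<open>s > 0\<close> unfolding avg_eq
    by (intro indep_normal_weighted_sum_tail_bound) auto
  ultimately show ?thesis by simp
qed

context prob_space_sequence
begin

lemma bounded_in_prob_if_quadratic_tail:
  assumes meas: "\<forall>\<^sub>F n in sequentially. X n \<in> borel_measurable (M n)"
    and tail: "\<And>K. c < K \<Longrightarrow>
      \<forall>\<^sub>F n in sequentially. measure (M n) {w \<in> space (M n). K < \<bar>X n w\<bar>} \<le> C / (K - c)\<^sup>2"
  shows "bounded_in_prob M X"
proof (rule bounded_in_probI[OF meas])
  fix b :: real assume "b > 0"
  define t where "t = max 1 (2 * \<bar>C\<bar> / b)"
  have "t \<ge> 1" "2 * \<bar>C\<bar> / b \<le> t" by (auto simp: t_def)
  then have "C / t\<^sup>2 \<le> \<bar>C\<bar> / t"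
    by (simp add: power2_eq_square divide_le_cancel frac_le)
  also have "\<bar>C\<bar> / t \<le> b / 2"
    using \<open>2 * \<bar>C\<bar> / b \<le> t\<close> \<open>t \<ge> 1\<close> \<open>b > 0\<close> by (simp add: field_simps)
  finally have "C / t\<^sup>2 < b" using \<open>b > 0\<close> by linarith
  then show "\<exists>K. \<forall>\<^sub>F n in sequentially. measure (M n) {w \<in> space (M n). K < \<bar>X n w\<bar>} < b"
    using tail[of "c + t"] \<open>t \<ge> 1\<close> by (intro exI[of _ "c + t"]) (auto elim: eventually_mono)
qed

lemma bounded_in_prob_std_normal:
  assumes "\<forall>\<^sub>F n in sequentially. distributed (M n) lborel (Z n) (\<lambda>t. ennreal (std_normal_density t))"
  shows "bounded_in_prob M Z"
proof (rule bounded_in_prob_if_quadratic_tail[where c = 0 and C = 1])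
  show "\<forall>\<^sub>F n in sequentially. Z n \<in> borel_measurable (M n)"
    using assms by eventually_elim (metis distributed_measurable measurable_lborel1)
  show "\<forall>\<^sub>F n in sequentially. measure (M n) {w \<in> space (M n). K < \<bar>Z n w\<bar>} \<le> 1 / (K - 0)\<^sup>2"
    if "0 < K" for K
    using prob_spaces assms
  proof eventually_elim
    case (elim n)
    then show ?case
      using prob_space.normal_tail_bound[OF elim(1,2), of K] \<open>0 < K\<close> by simp
  qed
qed

lemma bounded_in_prob_avg_indep_normal:
  fixes y :: "nat \<Rightarrow> nat \<Rightarrow> 'a \<Rightarrow> real" and u m :: "nat \<Rightarrow> nat \<Rightarrow> real"
  assumes distr: "\<forall>\<^sub>F n in sequentially. \<forall>i<n.
        distributed (M n) lborel (y n i) (\<lambda>t. ennreal (normal_density (m n i) s t))"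
    and "s > 0"
    and indep: "\<forall>\<^sub>F n in sequentially. prob_space.indep_vars (M n) (\<lambda>_. borel) (y n) {..<n}"
    and mean: "Bseq (\<lambda>n. avg n (\<lambda>i. u n i * m n i))"
    and second_moment: "Bseq (\<lambda>n. avg n (\<lambda>i. (u n i)\<^sup>2))"
  shows "bounded_in_prob M (\<lambda>n w. avg n (\<lambda>i. u n i * y n i w))"
proof -
  obtain B where B: "\<And>n. \<bar>avg n (\<lambda>i. u n i * m n i)\<bar> \<le> B" "\<And>n. \<bar>avg n (\<lambda>i. (u n i)\<^sup>2)\<bar> \<le> B"
    using mean second_moment unfolding Bseq_def real_norm_def by (metis max.cobounded1 max.cobounded2 order_trans)
  show ?thesis
  proof (rule bounded_in_prob_if_quadratic_tail[where c = B and C = "s\<^sup>2 * B"])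
    show "\<forall>\<^sub>F n in sequentially. (\<lambda>w. avg n (\<lambda>i. u n i * y n i w)) \<in> borel_measurable (M n)"
      using distr
    proof eventually_elim
      case (elim n)
      then have "y n i \<in> borel_measurable (M n)" if "i < n" for i
        using that by (metis distributed_measurable measurable_lborel1)
      then show ?case
        unfolding avg_def by (intro borel_measurable_divide borel_measurable_sum borel_measurable_times) auto
    qed
    show "\<forall>\<^sub>F n in sequentially.
        measure (M n) {w \<in> space (M n). K < \<bar>avg n (\<lambda>i. u n i * y n i w)\<bar>} \<le> s\<^sup>2 * B / (K - B)\<^sup>2"
      if "B < K" for K
      using prob_spaces indep distr eventually_gt_at_top[of 0]
      by eventually_elim
        (use B(1) abs_le_D1[OF B(2)] \<open>s > 0\<close> \<open>B < K\<close> in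
          \<open>auto intro!: prob_space.indep_normal_avg_tail_bound\<close>)
  qed
qed

end

section \<open>The private sufficient statistics\<close>

lemma avg_cong: "(\<And>i. i < n \<Longrightarrow> f i = g i) \<Longrightarrow> avg n f = avg n g"
  unfolding avg_def by (metis lessThan_iff sum.cong)

lemma avg_clip_eq: "(\<And>i. i < n \<Longrightarrow> f i \<in> {a..b}) \<Longrightarrow> avg n (\<lambda>i. clip a b (f i)) = avg n f"
  by (rule avg_cong) (auto simp: clip_def)

definition gauss_noise_sd :: "nat \<Rightarrow> real \<Rightarrow> real \<Rightarrow> real" where
  "gauss_noise_sd n rho v = sqrt (v / (rho / 5 * (real n)\<^sup>2))"

lemma private_moments_unclipped:
  assumes x: "\<And>i. i < n \<Longrightarrow> xs i \<in> {-D..D}" and y: "\<And>i. i < n \<Longrightarrow> ys i \<in> {-D..D}"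
  shows "t_xbar n D rho xs z = avg n xs + gauss_noise_sd n rho (2 * D\<^sup>2) * z 0"
    and "t_ybar n D rho ys z = avg n ys + gauss_noise_sd n rho (2 * D\<^sup>2) * z 1"
    and "t_x2bar n D rho xs z = avg n (\<lambda>i. (xs i)\<^sup>2) + gauss_noise_sd n rho (D ^ 4 / 2) * z 2"
    and "t_xybar n D rho xs ys z = avg n (\<lambda>i. xs i * ys i) + gauss_noise_sd n rho (2 * D ^ 4) * z 3"
proof -
  have "(xs i)\<^sup>2 \<in> {0..D\<^sup>2}" if "i < n" for i
    using x[OF that] abs_le_square_iff[of "xs i" D] by auto
  moreover have "xs i * ys i \<in> {-(D\<^sup>2)..D\<^sup>2}" if "i < n" for i
  proof -
    have "\<bar>xs i\<bar> \<le> D" "\<bar>ys i\<bar> \<le> D"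
      using x[OF that] y[OF that] by auto
    then have "\<bar>xs i * ys i\<bar> \<le> D\<^sup>2"
      using mult_mono[of "\<bar>xs i\<bar>" D "\<bar>ys i\<bar>" D] by (simp add: abs_mult power2_eq_square)
    then show ?thesis by (simp add: abs_le_iff)
  qed
  ultimately show "t_xbar n D rho xs z = avg n xs + gauss_noise_sd n rho (2 * D\<^sup>2) * z 0"
    and "t_ybar n D rho ys z = avg n ys + gauss_noise_sd n rho (2 * D\<^sup>2) * z 1"
    and "t_x2bar n D rho xs z = avg n (\<lambda>i. (xs i)\<^sup>2) + gauss_noise_sd n rho (D ^ 4 / 2) * z 2"
    and "t_xybar n D rho xs ys z = avg n (\<lambda>i. xs i * ys i) + gauss_noise_sd n rho (2 * D ^ 4) * z 3"
    using x y by (simp_all add: t_xbar_def t_ybar_def t_x2bar_def t_xybar_def gauss_noise_sd_def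
        avg_clip_eq mult.assoc)
qed

lemma tendsto_sqrt_n_gauss_noise_sd:
  assumes "(\<lambda>n. v n / (rho n * real n)) \<longlonglongrightarrow> 0"
  shows "(\<lambda>n. sqrt (real n) * gauss_noise_sd n (rho n) (v n)) \<longlonglongrightarrow> 0"
proof -
  have "sqrt (real n) * gauss_noise_sd n (rho n) (v n) = sqrt (5 * (v n / (rho n * real n)))" for n
    by (cases "n = 0"; cases "rho n = 0")
      (simp_all add: gauss_noise_sd_def real_sqrt_mult[symmetric] power2_eq_square field_simps)
  moreover have "(\<lambda>n. sqrt (5 * (v n / (rho n * real n)))) \<longlonglongrightarrow> sqrt 0"
    by (intro tendsto_real_sqrt tendsto_mult_right_zero assms)
  ultimately show ?thesis by simp
qed

lemma tilde_beta_eq_ols: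
  "tilde_beta n D rho xs ys z = ols_from_moments (t_xbar n D rho xs z) (t_ybar n D rho ys z)
     (t_x2bar n D rho xs z) (t_xybar n D rho xs ys z)"
  by (simp add: tilde_beta_def ols_from_moments_def Let_def)

lemma hat_beta_eq_ols:
  assumes "avg n (\<lambda>i. (xs i)\<^sup>2) \<noteq> (avg n xs)\<^sup>2"
  shows "hat_beta n xs ys = ols_from_moments (avg n xs) (avg n ys)
    (avg n (\<lambda>i. (xs i)\<^sup>2)) (avg n (\<lambda>i. xs i * ys i))"
proof -
  have "avg n (\<lambda>i. (xs i)\<^sup>2) - (avg n xs)\<^sup>2 \<noteq> 0" using assms by simp
  then show ?thesis
    by (simp add: hat_beta_def hat_beta1_def ols_from_moments_def field_simps power2_eq_square)
qed

section \<open>The regression model\<close>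

lemma (in prob_space) indep_sets_reindex:
  assumes "inj_on f I" and "indep_sets F (f ` I)"
  shows "indep_sets (\<lambda>i. F (f i)) I"
  unfolding indep_sets_def
proof (intro conjI ballI allI impI)
  show "F (f i) \<subseteq> events" if "i \<in> I" for i
    using assms(2) that by (auto simp: indep_sets_def)
  fix J A assume J: "J \<subseteq> I" "J \<noteq> {}" "finite J" and A: "A \<in> Pi J (\<lambda>i. F (f i))"
  have inj: "inj_on f J"
    using assms(1) J(1) by (rule inj_on_subset)
  define A' where "A' j = A (the_inv_into J f j)" for j
  have A'f: "A' (f j) = A j" if "j \<in> J" for j
    using the_inv_into_f_f[OF inj that] by (simp add: A'_def)
  have "A' \<in> Pi (f ` J) F" "f ` J \<subseteq> f ` I" "f ` J \<noteq> {}" "finite (f ` J)"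
    using A A'f J by auto
  then have "prob (\<Inter>j\<in>f ` J. A' j) = (\<Prod>j\<in>f ` J. prob (A' j))"
    using assms(2) unfolding indep_sets_def by blast
  then show "prob (\<Inter>j\<in>J. A j) = (\<Prod>j\<in>J. prob (A j))"
    using A'f by (simp add: prod.reindex[OF inj])
qed

lemma (in prob_space) indep_vars_reindex:
  assumes "inj_on f I" and "indep_vars M' X (f ` I)"
  shows "indep_vars (\<lambda>i. M' (f i)) (\<lambda>i. X (f i)) I"
  using assms(2) indep_sets_reindex[OF assms(1)] unfolding indep_vars_def by auto

locale private_regression =
  fixes sigma_e beta2 beta1 c_x c_x2 :: real
    and x :: "nat \<Rightarrow> nat \<Rightarrow> real"
    and M :: "nat \<Rightarrow> 'a measure"
    and y Z :: "nat \<Rightarrow> nat \<Rightarrow> 'a \<Rightarrow> real"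
    and Delta rho :: "nat \<Rightarrow> real"
  assumes sigma_pos: "sigma_e > 0"
    and prob: "\<And>n. n > 2 \<Longrightarrow> prob_space (M n)"
    and y_distr: "\<And>n i. n > 2 \<Longrightarrow> i < n \<Longrightarrow>
        distributed (M n) lborel (y n i)
          (\<lambda>t. ennreal (normal_density (beta2 + beta1 * x n i) sigma_e t))"
    and Z_distr: "\<And>n k. n > 2 \<Longrightarrow> k < 4 \<Longrightarrow>
        distributed (M n) lborel (Z n k) (\<lambda>t. ennreal (std_normal_density t))"
    and indep: "\<And>n. n > 2 \<Longrightarrow>
        prob_space.indep_vars (M n) (\<lambda>_. borel)
          (\<lambda>j. case j of Inl i \<Rightarrow> y n i | Inr k \<Rightarrow> Z n k)
          (Inl ` {..<n} \<union> Inr ` {..<4})"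
    and design: "(\<lambda>n. avg n (x n)) \<longlonglongrightarrow> c_x" "(\<lambda>n. avg n (\<lambda>i. (x n i)\<^sup>2)) \<longlonglongrightarrow> c_x2"
      "c_x2 > c_x\<^sup>2"
    and privacy_noise: "(\<lambda>n. (Delta n)\<^sup>2 / (rho n * real n)) \<longlonglongrightarrow> 0"
      "(\<lambda>n. (Delta n) ^ 4 / (rho n * real n)) \<longlonglongrightarrow> 0"
    and clipping: "(\<lambda>n. measure (M n)
        {\<omega> \<in> space (M n). \<exists>i<n. y n i \<omega> \<notin> {- Delta n .. Delta n}}) \<longlonglongrightarrow> 0"
      "\<And>n i. n > 2 \<Longrightarrow> i < n \<Longrightarrow> x n i \<in> {- Delta n .. Delta n}"

sublocale private_regression \<subseteq> prob_space_sequence M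
  by unfold_locales (rule eventually_mono[OF eventually_gt_at_top[of 2] prob])

context private_regression
begin

definition clipped :: "nat \<Rightarrow> 'a set" where
  "clipped n = {\<omega> \<in> space (M n). \<exists>i<n. y n i \<omega> \<notin> {- Delta n .. Delta n}}"

lemma clipped_sets: "\<forall>\<^sub>F n in sequentially. clipped n \<in> sets (M n)"
  using eventually_gt_at_top[of 2]
proof eventually_elim
  case (elim n)
  have "{\<omega> \<in> space (M n). y n i \<omega> \<notin> {- Delta n .. Delta n}} \<in> sets (M n)" if "i < n" for i
  proof -
    have [measurable]: "y n i \<in> borel_measurable (M n)"
      using distributed_measurable[OF y_distr[OF elim that]] by simp
    show ?thesis by measurable
  qed
  moreover have "clipped n = (\<Union>i<n. {\<omega> \<in> space (M n). y n i \<omega> \<notin> {- Delta n .. Delta n}})"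
    by (auto simp: clipped_def)
  ultimately show ?case by auto
qed

lemma private_moments_off_clipped:
  assumes "n > 2" and "\<omega> \<in> space (M n) - clipped n"
  shows "t_xbar n (Delta n) (rho n) (x n) (\<lambda>k. Z n k \<omega>) =
      avg n (x n) + gauss_noise_sd n (rho n) (2 * (Delta n)\<^sup>2) * Z n 0 \<omega>"
    and "t_ybar n (Delta n) (rho n) (\<lambda>i. y n i \<omega>) (\<lambda>k. Z n k \<omega>) =
      avg n (\<lambda>i. y n i \<omega>) + gauss_noise_sd n (rho n) (2 * (Delta n)\<^sup>2) * Z n 1 \<omega>"
    and "t_x2bar n (Delta n) (rho n) (x n) (\<lambda>k. Z n k \<omega>) =
      avg n (\<lambda>i. (x n i)\<^sup>2) + gauss_noise_sd n (rho n) ((Delta n) ^ 4 / 2) * Z n 2 \<omega>"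
    and "t_xybar n (Delta n) (rho n) (x n) (\<lambda>i. y n i \<omega>) (\<lambda>k. Z n k \<omega>) =
      avg n (\<lambda>i. x n i * y n i \<omega>) + gauss_noise_sd n (rho n) (2 * (Delta n) ^ 4) * Z n 3 \<omega>"
  using private_moments_unclipped[OF clipping(2)[OF assms(1)], where ys = "\<lambda>i. y n i \<omega>"] assms(2)
  by (auto simp: clipped_def)

lemma indep_responses: "\<forall>\<^sub>F n in sequentially. prob_space.indep_vars (M n) (\<lambda>_. borel) (y n) {..<n}"
  using eventually_gt_at_top[of 2]
proof eventually_elim
  case (elim n)
  have "inj_on Inl {..<n}"
    by (simp add: inj_on_def)
  moreover have "prob_space.indep_vars (M n) (\<lambda>_. borel)
      (\<lambda>j. case j of Inl i \<Rightarrow> y n i | Inr k \<Rightarrow> Z n k) (Inl ` {..<n})"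
    using indep[OF elim] by (rule prob_space.indep_vars_subset[OF prob[OF elim]]) auto
  ultimately have "prob_space.indep_vars (M n) (\<lambda>_. borel)
      (\<lambda>i. case Inl i of Inl i \<Rightarrow> y n i | Inr k \<Rightarrow> Z n k) {..<n}"
    by (rule prob_space.indep_vars_reindex[OF prob[OF elim]])
  then show ?case by simp
qed

lemma bounded_in_prob_weighted_avg_responses:
  assumes "convergent (\<lambda>n. avg n (\<lambda>i. u n i * (beta2 + beta1 * x n i)))"
    and "convergent (\<lambda>n. avg n (\<lambda>i. (u n i)\<^sup>2))"
  shows "bounded_in_prob M (\<lambda>n \<omega>. avg n (\<lambda>i. u n i * y n i \<omega>))"
proof (rule bounded_in_prob_avg_indep_normal[OF _ sigma_pos indep_responses])
  show "\<forall>\<^sub>F n in sequentially. \<forall>i<n.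
      distributed (M n) lborel (y n i) (\<lambda>t. ennreal (normal_density (beta2 + beta1 * x n i) sigma_e t))"
    using eventually_gt_at_top[of 2] by eventually_elim (simp add: y_distr)
qed (use assms in \<open>simp_all add: convergent_imp_Bseq\<close>)

lemma avg_y_bounded: "bounded_in_prob M (\<lambda>n \<omega>. avg n (\<lambda>i. y n i \<omega>))"
proof -
  have "(\<lambda>n. avg n (\<lambda>i. 1 * (beta2 + beta1 * x n i))) \<longlonglongrightarrow> beta2 + beta1 * c_x"
    by (rule Lim_transform_eventually[OF tendsto_add[OF tendsto_const tendsto_mult[OF tendsto_const design(1)]]])
      (use eventually_gt_at_top[of 0] in
        \<open>eventually_elim, simp add: avg_def sum.distrib sum_distrib_left[symmetric] field_simps\<close>)
  moreover have "(\<lambda>n. avg n (\<lambda>i. 1\<^sup>2)) \<longlonglongrightarrow> 1"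
    by (rule Lim_transform_eventually[OF tendsto_const])
      (use eventually_gt_at_top[of 0] in \<open>eventually_elim, simp add: avg_def\<close>)
  ultimately show ?thesis
    using bounded_in_prob_weighted_avg_responses[of "\<lambda>n i. 1"] by (simp add: convergentI)
qed

lemma avg_xy_bounded: "bounded_in_prob M (\<lambda>n \<omega>. avg n (\<lambda>i. x n i * y n i \<omega>))"
proof -
  have "avg n (\<lambda>i. x n i * (beta2 + beta1 * x n i)) = beta2 * avg n (x n) + beta1 * avg n (\<lambda>i. (x n i)\<^sup>2)"
    for n
    by (simp add: avg_def sum.distrib sum_distrib_left[symmetric] add_divide_distrib
        power2_eq_square algebra_simps)
  then have "(\<lambda>n. avg n (\<lambda>i. x n i * (beta2 + beta1 * x n i))) \<longlonglongrightarrow> beta2 * c_x + beta1 * c_x2"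
    using design(1,2) by (simp add: tendsto_intros)
  then show ?thesis
    using bounded_in_prob_weighted_avg_responses[of x] design(2) by (simp add: convergentI)
qed

lemma sqrt_n_noise_vanishes:
  assumes "(\<lambda>n. v n / (rho n * real n)) \<longlonglongrightarrow> 0" and "k < 4"
  shows "vanishes_in_prob M (\<lambda>n \<omega>. sqrt (real n) * (gauss_noise_sd n (rho n) (v n) * Z n k \<omega>))"
proof -
  have "\<forall>\<^sub>F n in sequentially. distributed (M n) lborel (Z n k) (\<lambda>t. ennreal (std_normal_density t))"
    using eventually_gt_at_top[of 2] by eventually_elim (rule Z_distr[OF _ assms(2)])
  with vanishes_in_prob_const[OF tendsto_sqrt_n_gauss_noise_sd[OF assms(1)]]
  show ?thesis
    by (simp add: bounded_in_prob_std_normal vanishes_in_prob_mult_bounded mult.assoc[symmetric])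
qed

lemma privacy_noise_rates:
  "(\<lambda>n. 2 * (Delta n)\<^sup>2 / (rho n * real n)) \<longlonglongrightarrow> 0"
  "(\<lambda>n. (Delta n) ^ 4 / 2 / (rho n * real n)) \<longlonglongrightarrow> 0"
  "(\<lambda>n. 2 * (Delta n) ^ 4 / (rho n * real n)) \<longlonglongrightarrow> 0"
  using tendsto_mult_right_zero[OF privacy_noise(1), of 2]
    tendsto_mult_right_zero[OF privacy_noise(2), of "1/2"] tendsto_mult_right_zero[OF privacy_noise(2), of 2]
  by simp_all

lemma sqrt_n_privacy_noise_vanishes:
  "vanishes_in_prob M (\<lambda>n \<omega>. sqrt (real n) * (gauss_noise_sd n (rho n) (2 * (Delta n)\<^sup>2) * Z n 0 \<omega>))"
  "vanishes_in_prob M (\<lambda>n \<omega>. sqrt (real n) * (gauss_noise_sd n (rho n) (2 * (Delta n)\<^sup>2) * Z n 1 \<omega>))"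
  "vanishes_in_prob M (\<lambda>n \<omega>. sqrt (real n) * (gauss_noise_sd n (rho n) ((Delta n) ^ 4 / 2) * Z n 2 \<omega>))"
  "vanishes_in_prob M (\<lambda>n \<omega>. sqrt (real n) * (gauss_noise_sd n (rho n) (2 * (Delta n) ^ 4) * Z n 3 \<omega>))"
  by (rule sqrt_n_noise_vanishes, fact privacy_noise_rates, simp)+

lemma conv_in_prob_tilde_betaN:
  "conv_in_prob M (\<lambda>n \<omega>. sqrt (real n) *\<^sub>R
     (tilde_betaN n (Delta n) (rho n) (\<lambda>i. y n i \<omega>) (\<lambda>k. Z n k \<omega>) - hat_betaN n (\<lambda>i. y n i \<omega>))) 0"
  by (rule conv_in_prob_zero_if_eq_Pair_off_small_sets[OF sqrt_n_privacy_noise_vanishes(2)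
        vanishes_in_prob_const[OF tendsto_const] clipped_sets clipping(1)[folded clipped_def]])
    (use eventually_gt_at_top[of 2] in \<open>eventually_elim,
      auto simp: tilde_betaN_def hat_betaN_def private_moments_off_clipped\<close>)

lemma conv_in_prob_tilde_beta:
  "conv_in_prob M (\<lambda>n \<omega>. sqrt (real n) *\<^sub>R
     (tilde_beta n (Delta n) (rho n) (x n) (\<lambda>i. y n i \<omega>) (\<lambda>k. Z n k \<omega>) - hat_beta n (x n) (\<lambda>i. y n i \<omega>))) 0"
proof -
  have rate: "\<forall>\<^sub>F n in sequentially. 1 \<le> sqrt (real n)"
    using eventually_ge_at_top[of 1] by eventually_elim simp
  have nondegenerate: "c_x2 \<noteq> c_x\<^sup>2"
    using design(3) by simp
  note vanishes = vanishes_in_prob_ols_from_moments_perturbation[OF rate design(1,2) nondegenerate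
      avg_y_bounded avg_xy_bounded sqrt_n_privacy_noise_vanishes]
  have nonsingular: "\<forall>\<^sub>F n in sequentially. avg n (\<lambda>i. (x n i)\<^sup>2) - (avg n (x n))\<^sup>2 \<noteq> 0"
    using nondegenerate
    by (intro tendsto_imp_eventually_ne[of _ "c_x2 - c_x\<^sup>2"] tendsto_intros design(1,2)) simp
  show ?thesis
    by (rule conv_in_prob_zero_if_eq_Pair_off_small_sets[OF vanishes clipped_sets clipping(1)[folded clipped_def]])
      (use nonsingular eventually_gt_at_top[of 2] in \<open>eventually_elim,
        auto simp: tilde_beta_eq_ols hat_beta_eq_ols private_moments_off_clipped prod_eq_iff\<close>)
qed

end

theorem lemma5p11:
  fixes sigma_e beta2 beta1 c_x c_x2 :: real
    and x :: "nat \<Rightarrow> nat \<Rightarrow> real"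
    and M :: "nat \<Rightarrow> 'a measure"
    and y :: "nat \<Rightarrow> nat \<Rightarrow> 'a \<Rightarrow> real"
    and Z :: "nat \<Rightarrow> nat \<Rightarrow> 'a \<Rightarrow> real"
    and Delta rho :: "nat \<Rightarrow> real"
  assumes sigma_pos: "sigma_e > 0"
    and prob: "\<And>n. n > 2 \<Longrightarrow> prob_space (M n)"
    and y_distr: "\<And>n i. n > 2 \<Longrightarrow> i < n \<Longrightarrow>
        distributed (M n) lborel (y n i)
          (\<lambda>t. ennreal (normal_density (beta2 + beta1 * x n i) sigma_e t))"
    and Z_distr: "\<And>n k. n > 2 \<Longrightarrow> k < 4 \<Longrightarrow>
        distributed (M n) lborel (Z n k) (\<lambda>t. ennreal (std_normal_density t))"
    and indep: "\<And>n. n > 2 \<Longrightarrow>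
        prob_space.indep_vars (M n) (\<lambda>_. borel)
          (\<lambda>j. case j of Inl i \<Rightarrow> y n i | Inr k \<Rightarrow> Z n k)
          (Inl ` {..<n} \<union> Inr ` {..<4})"
    and Delta_pos: "\<And>n. n > 2 \<Longrightarrow> Delta n > 0"
    and rho_pos: "\<And>n. n > 2 \<Longrightarrow> rho n > 0"
    and A1: "(\<lambda>n. avg n (x n)) \<longlonglongrightarrow> c_x"
        "(\<lambda>n. avg n (\<lambda>i. (x n i)\<^sup>2)) \<longlonglongrightarrow> c_x2"
        "c_x2 > c_x\<^sup>2"
    and A2: "\<exists>eta::real. (\<lambda>n. (\<Sum>i<n. ((beta2 + beta1 * x n i)
                   - (beta2 + beta1 * avg n (x n)))\<^sup>2) / sigma_e\<^sup>2) \<longlonglongrightarrow> eta\<^sup>2"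
    and A3: "(\<lambda>n. (Delta n)\<^sup>2 / (rho n * real n)) \<longlonglongrightarrow> 0"
        "(\<lambda>n. (Delta n) ^ 4 / (rho n * real n)) \<longlonglongrightarrow> 0"
    and A4: "(\<lambda>n. measure (M n)
               {\<omega> \<in> space (M n). \<exists>i<n. y n i \<omega> \<notin> {- Delta n .. Delta n}}) \<longlonglongrightarrow> 0"
        "\<And>n i. n > 2 \<Longrightarrow> i < n \<Longrightarrow> x n i \<in> {- Delta n .. Delta n}"
  shows "conv_in_prob M
           (\<lambda>n \<omega>. sqrt (real n) *\<^sub>R
              (tilde_betaN n (Delta n) (rho n) (\<lambda>i. y n i \<omega>) (\<lambda>k. Z n k \<omega>)
               - hat_betaN n (\<lambda>i. y n i \<omega>))) 0
       \<and> conv_in_prob M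
           (\<lambda>n \<omega>. sqrt (real n) *\<^sub>R
              (tilde_beta n (Delta n) (rho n) (x n) (\<lambda>i. y n i \<omega>) (\<lambda>k. Z n k \<omega>)
               - hat_beta n (x n) (\<lambda>i. y n i \<omega>))) 0"
proof -
  interpret private_regression sigma_e beta2 beta1 c_x c_x2 x M y Z Delta rho
    by (rule private_regression.intro) (fact assms)+
  show ?thesis
    using conv_in_prob_tilde_betaN conv_in_prob_tilde_beta by blast
qed

end
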